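(* Let $m$ be a tour with core $K$. Then the interior of $K$ equals $\bigcap_{\theta\in\mathbb{S}^1}\mathrm{int}\big(D^+(\theta)\big)$. Moreover, $\partial K\subseteq\bigcup_{\theta\in\mathbb{S}^1}D(\theta)$.
   Context: Write $\mathbb{S}^1=\mathbb{R}/2\pi\mathbb{Z}$, $u(\theta)=(\cos\theta,\sin\theta)$ and $u^\perp(\theta)=(-\sin\theta,\cos\theta)$. A ruled function $R:\mathbb{S}^1\to\mathbb{R}$ is one having a left limit $R_l(\theta)$ and a right limit $R_r(\theta)$ at every point. A tour is a continuous map $m:\mathbb{S}^1\to\mathbb{R}^2$ such that: - $m$ has left and right derivatives at every point; - there is a ruled function $R$ with $m'_l(\theta)=R_l(\theta)u(\theta)$ and $m'_r(\theta)=R_r(\theta)u(\theta)$. For each $\theta$, $D(\theta)=m(\theta)+\mathbb{R}u(\theta)$ is the line oriented by $u(\theta)$, and $D^+(\theta)=\{x:\langle x-m(\theta),u^\perp(\theta)\rangle\ge0\}$ is its closed left half-plane. The core of the tour is $K=\bigcap_{\theta}D^+(\theta)$. *)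

theory Defs
  imports "HOL-Analysis.Analysis"
begin

text \<open>The circle S^1 = R/2piZ is modelled by 2pi-periodic functions on the reals;
  the plane R^2 is modelled by real \<times> real with its standard inner product.\<close>

definition uvec :: "real \<Rightarrow> real \<times> real" where
  "uvec \<theta> = (cos \<theta>, sin \<theta>)"

definition uperp :: "real \<Rightarrow> real \<times> real" where
  "uperp \<theta> = (- sin \<theta>, cos \<theta>)"

definition periodic2pi :: "(real \<Rightarrow> 'a) \<Rightarrow> bool" where
  "periodic2pi f \<longleftrightarrow> (\<forall>\<theta>. f (\<theta> + 2 * pi) = f \<theta>)"

definition ruled :: "(real \<Rightarrow> real) \<Rightarrow> bool" where
  "ruled R \<longleftrightarrow> periodic2pi R \<and>
     (\<forall>\<theta>. (\<exists>l. (R \<longlongrightarrow> l) (at_left \<theta>)) \<and> (\<exists>r. (R \<longlongrightarrow> r) (at_right \<theta>)))"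

definition tour :: "(real \<Rightarrow> real \<times> real) \<Rightarrow> bool" where
  "tour m \<longleftrightarrow> periodic2pi m \<and> continuous_on UNIV m \<and>
     (\<exists>R. ruled R \<and>
        (\<forall>\<theta>. (m has_vector_derivative (Lim (at_left \<theta>) R) *\<^sub>R uvec \<theta>) (at \<theta> within {..\<theta>}) \<and>
              (m has_vector_derivative (Lim (at_right \<theta>) R) *\<^sub>R uvec \<theta>) (at \<theta> within {\<theta>..})))"

definition Dline :: "(real \<Rightarrow> real \<times> real) \<Rightarrow> real \<Rightarrow> (real \<times> real) set" where
  "Dline m \<theta> = {m \<theta> + t *\<^sub>R uvec \<theta> | t. True}"

definition Dplus :: "(real \<Rightarrow> real \<times> real) \<Rightarrow> real \<Rightarrow> (real \<times> real) set" where
  "Dplus m \<theta> = {x. inner (x - m \<theta>) (uperp \<theta>) \<ge> 0}"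

definition core :: "(real \<Rightarrow> real \<times> real) \<Rightarrow> (real \<times> real) set" where
  "core m = (\<Inter>\<theta>. Dplus m \<theta>)"

end

theory Submission
  imports Defs
begin

text \<open>A point strictly inside every half-plane \<open>D\<^sup>+(\<theta>)\<close> has a distance
  \<open>\<langle>x - m \<theta>, u\<^sup>\<perp>(\<theta>)\<rangle>\<close> to the line \<open>D(\<theta>)\<close> that depends continuously and
  periodically on \<open>\<theta>\<close>, hence has a positive minimum \<open>d\<close> over the circle; the ball
  of radius \<open>d\<close> around \<open>x\<close> then lies in every half-plane, so in the core. Conversely
  the core is closed, so a frontier point lies in the core but, by the first part,
  outside the open half-plane of some \<open>\<theta>\<close>: it sits on the line \<open>D(\<theta>)\<close>.\<close>

lemma norm_uperp [simp]: "norm (uperp \<theta>) = 1"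
  by (simp add: uperp_def norm_Pair)

lemma uperp_nonzero: "uperp \<theta> \<noteq> 0"
  using norm_uperp[of \<theta>] by (metis norm_zero zero_neq_one)

lemma inner_uvec_uperp [simp]: "inner (uvec \<theta>) (uperp \<theta>) = 0"
  by (simp add: uvec_def uperp_def)

lemma interior_Dplus: "interior (Dplus m \<theta>) = {x. inner (x - m \<theta>) (uperp \<theta>) > 0}"
proof -
  have "Dplus m \<theta> = {x. uperp \<theta> \<bullet> x \<ge> uperp \<theta> \<bullet> m \<theta>}"
    by (auto simp: Dplus_def inner_diff_right inner_commute)
  moreover have "{x. inner (x - m \<theta>) (uperp \<theta>) > 0} = {x. uperp \<theta> \<bullet> x > uperp \<theta> \<bullet> m \<theta>}"
    by (auto simp: inner_diff_right inner_commute)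
  ultimately show ?thesis
    using interior_halfspace_ge[OF uperp_nonzero] by simp
qed

lemma closed_core: "closed (core m)"
  unfolding core_def Dplus_def by (intro closed_INT ballI closed_Collect_le continuous_intros)

lemma mem_Dline_iff: "x \<in> Dline m \<theta> \<longleftrightarrow> inner (x - m \<theta>) (uperp \<theta>) = 0"
proof
  assume "x \<in> Dline m \<theta>"
  then show "inner (x - m \<theta>) (uperp \<theta>) = 0"
    by (auto simp: Dline_def)
next
  assume orth: "inner (x - m \<theta>) (uperp \<theta>) = 0"
  obtain a b where ab: "x - m \<theta> = (a, b)" by (cases "x - m \<theta>")
  define t where "t = a * cos \<theta> + b * sin \<theta>"
  have "b * cos \<theta> = a * sin \<theta>"
    using orth ab by (simp add: uperp_def)
  then have "a = t * cos \<theta>" "b = t * sin \<theta>"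
    unfolding t_def using sin_cos_squared_add[of \<theta>] by algebra+
  then have "x = m \<theta> + t *\<^sub>R uvec \<theta>"
    using ab by (simp add: uvec_def) (metis diff_add_cancel add.commute)
  then show "x \<in> Dline m \<theta>"
    unfolding Dline_def by blast
qed

lemma periodic2pi_shift_int:
  assumes "periodic2pi f" shows "f (t + of_int k * (2 * pi)) = f t"
proof (induction k rule: int_induct[where k = 0])
  case (step1 i)
  then show ?case
    using assms unfolding periodic2pi_def by (metis add.assoc distrib_right mult_1 of_int_add of_int_1)
next
  case (step2 i)
  then show ?case
    using assms unfolding periodic2pi_def
    by (metis add.assoc diff_add_cancel distrib_right mult_1 of_int_1 of_int_diff)
qed simp

lemma periodic2pi_value_in_period:
  assumes "periodic2pi f" shows "\<exists>s\<in>{0..2 * pi}. f t = f s"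
proof -
  define s where "s = frac (t / (2 * pi)) * (2 * pi)"
  have "s \<in> {0..2 * pi}"
    using frac_ge_0[of "t / (2 * pi)"] frac_lt_1[of "t / (2 * pi)"] by (simp add: s_def)
  moreover have "t = s + of_int \<lfloor>t / (2 * pi)\<rfloor> * (2 * pi)"
    by (simp add: s_def frac_def algebra_simps)
  ultimately show ?thesis
    using periodic2pi_shift_int[OF assms] by metis
qed

lemma periodic2pi_continuous_attains_inf:
  fixes f :: "real \<Rightarrow> real"
  assumes "periodic2pi f" "continuous_on UNIV f"
  obtains \<theta>\<^sub>0 where "\<And>t. f \<theta>\<^sub>0 \<le> f t"
proof -
  have "continuous_on {0..2 * pi} f"
    using assms(2) by (rule continuous_on_subset) simp
  moreover have "{0..2 * pi} \<noteq> {}"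
    using pi_gt_zero by simp
  ultimately obtain \<theta>\<^sub>0 where "\<forall>s\<in>{0..2 * pi}. f \<theta>\<^sub>0 \<le> f s"
    using continuous_attains_inf[OF compact_Icc] by blast
  then show ?thesis
    using that periodic2pi_value_in_period[OF assms(1)] by metis
qed

lemma interior_core:
  assumes "periodic2pi m" "continuous_on UNIV m"
  shows "interior (core m) = (\<Inter>\<theta>. interior (Dplus m \<theta>))"
proof
  show "interior (core m) \<subseteq> (\<Inter>\<theta>. interior (Dplus m \<theta>))"
    unfolding core_def by (auto intro: interior_mono[THEN subsetD, rotated])
next
  show "(\<Inter>\<theta>. interior (Dplus m \<theta>)) \<subseteq> interior (core m)"
  proof
    fix x assume "x \<in> (\<Inter>\<theta>. interior (Dplus m \<theta>))"
    then have pos: "\<And>\<theta>. inner (x - m \<theta>) (uperp \<theta>) > 0"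
      by (auto simp: interior_Dplus)
    define f where "f \<theta> = inner (x - m \<theta>) (uperp \<theta>)" for \<theta>
    have "periodic2pi f"
      using assms(1) by (simp add: periodic2pi_def f_def uperp_def)
    moreover have "continuous_on UNIV f"
      unfolding f_def uperp_def by (intro continuous_intros assms(2))
    ultimately obtain \<theta>\<^sub>0 where min: "\<And>t. f \<theta>\<^sub>0 \<le> f t"
      using periodic2pi_continuous_attains_inf by blast
    have "ball x (f \<theta>\<^sub>0) \<subseteq> core m"
    proof
      fix y assume "y \<in> ball x (f \<theta>\<^sub>0)"
      then have "norm (y - x) < f \<theta>\<^sub>0"
        by (simp add: dist_norm norm_minus_commute)
      then have bound: "\<bar>inner (y - x) (uperp \<theta>)\<bar> < f \<theta>" for \<theta>
        using Cauchy_Schwarz_ineq2[of "y - x" "uperp \<theta>"] min[of \<theta>] by simp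
      have shift: "inner (y - m \<theta>) (uperp \<theta>) = f \<theta> + inner (y - x) (uperp \<theta>)" for \<theta>
        by (simp add: f_def inner_diff_left)
      have "0 \<le> inner (y - m \<theta>) (uperp \<theta>)" for \<theta>
        using bound[of \<theta>] shift[of \<theta>] by linarith
      then show "y \<in> core m"
        by (simp add: core_def Dplus_def)
    qed
    then show "x \<in> interior (core m)"
      using pos[of \<theta>\<^sub>0] by (metis f_def centre_in_ball interior_maximal open_ball subsetD)
  qed
qed

lemma frontier_core_subset_Dlines:
  assumes "periodic2pi m" "continuous_on UNIV m"
  shows "frontier (core m) \<subseteq> (\<Union>\<theta>. Dline m \<theta>)"
proof
  fix x assume x: "x \<in> frontier (core m)"
  then obtain \<theta> where "x \<notin> interior (Dplus m \<theta>)"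
    using interior_core[OF assms] by (auto simp: frontier_def)
  moreover have "x \<in> Dplus m \<theta>"
    using x closed_core by (auto simp: frontier_def core_def)
  ultimately have "x \<in> Dline m \<theta>"
    unfolding interior_Dplus mem_Dline_iff by (simp add: Dplus_def)
  then show "x \<in> (\<Union>\<theta>. Dline m \<theta>)" by blast
qed

theorem mainTheorem2:
  assumes "tour m"
  shows "interior (core m) = (\<Inter>\<theta>. interior (Dplus m \<theta>))
         \<and> frontier (core m) \<subseteq> (\<Union>\<theta>. Dline m \<theta>)"
  using assms interior_core frontier_core_subset_Dlines by (simp add: tour_def)

end
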